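(* For all $n\ge2$, each of the four sets $S_n(I,J)$, $S_n(K,J)$, $S_n(J,I)$, $S_n(J,K)$ is mapped into itself by $T_3$.
   Context: A twisted $n$-gon is a map $P:\mathbb{Z}\to\mathbb{RP}^2$ with every three consecutive points non-collinear and $P_{i+n}=M(P_i)$ for a fixed $M\in\mathrm{PGL}_3(\mathbb{R})$; $\mathcal{P}_n$ is the set of classes modulo projective equivalence. $P$ is $3$-nice if $P_i,P_{i+1},P_{i+3},P_{i+4}$ are in general position for all $i$. $T_3(P)=P'$ with $P'_i=P_iP_{i+3}\cap P_{i+1}P_{i+4}$ (lines through the indicated points); it acts on classes of $3$-nice twisted $n$-gons. Inverse cross ratio: for four collinear points $A,B,C,D$, map their line projectively to the $x$-axis with coordinates $a,b,c,d$ and set $\chi(A,B,C,D)=\frac{(a-b)(c-d)}{(a-c)(b-d)}$ (value in $\mathbb{R}\cup\{\infty\}$, projectively invariant). Corner invariants: $x_{2i}=\chi(P_{i-2},P_{i-1},P_{i-2}P_{i-1}\cap P_iP_{i+1},P_{i-2}P_{i-1}\cap P_{i+1}P_{i+2})$ and $x_{2i+1}=\chi(P_{i+2},P_{i+1},P_{i+2}P_{i+1}\cap P_iP_{i-1},P_{i+2}P_{i+1}\cap P_{i-1}P_{i-2})$, with $x_{j+2n}=x_j$. Let $I=(-\infty,0)$, $J=(0,1)$, $K=(1,\infty)$. $S_n(I,J)$ is the set of $[P]\in\mathcal{P}_n$ whose corner invariants satisfy $(x_{2i},x_{2i+1})\in I\times J$ for all $i$; $S_n(K,J)$, $S_n(J,I)$,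 $S_n(J,K)$ are defined in the same way with $K\times J$, $J\times I$, $J\times K$. (Elements of these sets are automatically $3$-nice.) *)

theory Defs
  imports "HOL-Analysis.Analysis" "HOL-Analysis.Cross3"
begin

text \<open>Points of RP^2 are represented by nonzero homogeneous coordinate vectors in real^3.
  A map Z -> RP^2 is represented by a lift P :: int => real^3 with P i nonzero.\<close>

definition line_through :: "real^3 \<Rightarrow> real^3 \<Rightarrow> real^3" where
  "line_through A B = cross3 A B"

definition meet :: "real^3 \<Rightarrow> real^3 \<Rightarrow> real^3" where
  "meet l m = cross3 l m"

definition proj_collinear :: "real^3 \<Rightarrow> real^3 \<Rightarrow> real^3 \<Rightarrow> bool" where
  "proj_collinear A B C \<longleftrightarrow> A \<bullet> cross3 B C = 0"

definition twisted_ngon :: "nat \<Rightarrow> (int \<Rightarrow> real^3) \<Rightarrow> bool" where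
  "twisted_ngon n P \<longleftrightarrow>
     (\<forall>i. P i \<noteq> 0) \<and>
     (\<forall>i. \<not> proj_collinear (P i) (P (i+1)) (P (i+2))) \<and>
     (\<exists>M :: real^3^3. invertible M \<and>
        (\<forall>i. \<exists>c::real. c \<noteq> 0 \<and> P (i + int n) = c *\<^sub>R (M *v P i)))"

text \<open>Inverse cross ratio of four collinear points, with value in R \<union> {\<infinity>}; None encodes \<infinity>.
  For A, B, C, D in a common plane through 0 with unit normal u one has
  cross3 A B = [A,B] u where [A,B] is the 2x2 determinant in coordinates of the line, so
  (a-b)(c-d)/((a-c)(b-d)) = ((A x B).(C x D)) / ((A x C).(B x D)).\<close>
definition inv_cross_ratio :: "real^3 \<Rightarrow> real^3 \<Rightarrow> real^3 \<Rightarrow> real^3 \<Rightarrow> real option" where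
  "inv_cross_ratio A B C D =
     (let num = cross3 A B \<bullet> cross3 C D; den = cross3 A C \<bullet> cross3 B D
      in if den = 0 then None else Some (num / den))"

definition corner_even :: "(int \<Rightarrow> real^3) \<Rightarrow> int \<Rightarrow> real option" where
  "corner_even P i =
     inv_cross_ratio (P (i-2)) (P (i-1))
       (meet (line_through (P (i-2)) (P (i-1))) (line_through (P i) (P (i+1))))
       (meet (line_through (P (i-2)) (P (i-1))) (line_through (P (i+1)) (P (i+2))))"

definition corner_odd :: "(int \<Rightarrow> real^3) \<Rightarrow> int \<Rightarrow> real option" where
  "corner_odd P i =
     inv_cross_ratio (P (i+2)) (P (i+1))
       (meet (line_through (P (i+2)) (P (i+1))) (line_through (P i) (P (i-1))))
       (meet (line_through (P (i+2)) (P (i+1))) (line_through (P (i-1)) (P (i-2))))"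

definition Iint :: "real set" where "Iint = {..<0}"
definition Jint :: "real set" where "Jint = {0<..<1}"
definition Kint :: "real set" where "Kint = {1<..}"

text \<open>Membership of (the class of) P in S_n(X,Y). All conditions are invariant under
  rescaling representatives and under projective transformations, so this is a condition
  on the class [P].\<close>
definition in_S :: "nat \<Rightarrow> real set \<Rightarrow> real set \<Rightarrow> (int \<Rightarrow> real^3) \<Rightarrow> bool" where
  "in_S n X Y P \<longleftrightarrow> twisted_ngon n P \<and>
     (\<forall>i. \<exists>x y. corner_even P i = Some x \<and> x \<in> X \<and> corner_odd P i = Some y \<and> y \<in> Y)"

definition T3 :: "(int \<Rightarrow> real^3) \<Rightarrow> int \<Rightarrow> real^3" where
  "T3 P i = meet (line_through (P i) (P (i+3))) (line_through (P (i+1)) (P (i+4)))"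

end

theory Submission
  imports Defs
begin

text \<open>
  Rescale the lift so that any three consecutive vertices have triple product 1. The vertices
  then obey a recurrence Q (j+3) = a j Q (j+2) - c j Q (j+1) + Q j, the corner invariants
  x = corner_even and y = corner_odd become x (j+2) = a j / (c j c (j+1)) and
  y (j+2) = c (j+1) / (a (j+1) a j), and each vertex of T3 Q is an explicit combination of three
  consecutive vertices of Q. The triple products of vertices of T3 Q factor through two
  polynomials E and F in the a's and c's, which up to nonzero monomials are 1 - x j - y (j+1)
  and (1 - x j)(1 - y (j+2)) - x (j+1) y (j+1). Hence the corner invariants of T3 P are rational
  functions of four corner invariants of P. On I \<times> J and K \<times> J these maps preserve the box by
  sign considerations; J \<times> I and J \<times> K follow because exchanging the roles of even and odd
  corners turns one map into the other.
\<close>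

section \<open>Triple products\<close>

definition triple :: "real^3 \<Rightarrow> real^3 \<Rightarrow> real^3 \<Rightarrow> real" where
  "triple x y z = x \<bullet> cross3 y z"

lemma triple_expand:
  "triple x y z = x$1 * (y$2 * z$3 - y$3 * z$2) + x$2 * (y$3 * z$1 - y$1 * z$3)
                + x$3 * (y$1 * z$2 - y$2 * z$1)"
  unfolding triple_def cross3_def inner_vec_def sum_3 by (simp add: algebra_simps)

lemma triple_cycle: "triple y z x = triple x y z"
  by (simp add: triple_expand algebra_simps)

lemma triple_swap_13: "triple z y x = - triple x y z"
  by (simp add: triple_expand algebra_simps)

lemma triple_swap_23: "triple x z y = - triple x y z"
  by (simp add: triple_expand algebra_simps)

lemma triple_repeated_23: "triple x y y = 0"
  by (simp add: triple_expand algebra_simps)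

lemma triple_scaleR: "triple (a *\<^sub>R x) (b *\<^sub>R y) (c *\<^sub>R z) = a * b * c * triple x y z"
  by (simp add: triple_def cross_mult_left cross_mult_right)

lemma triple_matrix: "triple (M *v x) (M *v y) (M *v z) = det M * triple x y z"
  unfolding triple_expand det_3 matrix_vector_mult_def sum_3 by (simp add: algebra_simps)

lemma triple_zero_left [simp]: "triple 0 y z = 0"
  by (simp add: triple_def)

lemma triple_lin_3:
  "triple x y (a *\<^sub>R u - b *\<^sub>R v + w) = a * triple x y u - b * triple x y v + triple x y w"
  by (simp add: triple_expand algebra_simps)

lemma cross3_cross3:
  "cross3 (cross3 w x) (cross3 y z) = triple w x z *\<^sub>R y - triple w x y *\<^sub>R z"
  by (simp add: triple_def dot_cross_det cross_cross_det)

lemma cramer_normalized: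
  assumes "triple u v w = 1" and "triple v w x = 1"
  shows "x = triple u v x *\<^sub>R w - triple u w x *\<^sub>R v + u"
proof -
  have "triple u v w *\<^sub>R x = triple v w x *\<^sub>R u - triple u w x *\<^sub>R v + triple u v x *\<^sub>R w"
    unfolding vec_eq_iff forall_3 triple_expand by (simp add: algebra_simps)
  then show ?thesis using assms by (simp add: algebra_simps)
qed

lemma proj_collinear_iff_triple: "proj_collinear A B C \<longleftrightarrow> triple A B C = 0"
  by (simp add: proj_collinear_def triple_def)

lemma inv_cross_ratio_corner:
  "inv_cross_ratio A B (cross3 (cross3 A B) (cross3 X Y)) (cross3 (cross3 A B) (cross3 Y Z)) =
   (if cross3 A B = 0 \<or> triple A X Y = 0 \<or> triple B Y Z = 0 then None
    else Some (triple A B Y * triple X Y Z / (triple A X Y * triple B Y Z)))"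
proof -
  let ?L = "cross3 A B"
  let ?C = "cross3 ?L (cross3 X Y)" and ?D = "cross3 ?L (cross3 Y Z)"
  have C: "?C = triple A X Y *\<^sub>R B - triple B X Y *\<^sub>R A"
    and D: "?D = triple A Y Z *\<^sub>R B - triple B Y Z *\<^sub>R A"
    by (subst cross_skew, simp add: cross3_cross3 triple_cycle)+
  have pluecker:
    "triple A X Y * triple B Y Z - triple B X Y * triple A Y Z = triple A B Y * triple X Y Z"
    unfolding triple_expand by algebra
  have num: "cross3 A B \<bullet> cross3 ?C ?D = (triple A B Y * triple X Y Z) * (?L \<bullet> ?L)"
    unfolding C D pluecker[symmetric] by (simp add: cross3_simps)
  have den: "cross3 A ?C \<bullet> cross3 B ?D = (triple A X Y * triple B Y Z) * (?L \<bullet> ?L)"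
    unfolding C D by (simp add: cross3_simps)
  show ?thesis
    unfolding inv_cross_ratio_def Let_def num den by auto
qed

lemma corner_even_triple:
  "corner_even P (j + 2) =
     (if cross3 (P j) (P (j+1)) = 0 \<or> triple (P j) (P (j+2)) (P (j+3)) = 0
         \<or> triple (P (j+1)) (P (j+3)) (P (j+4)) = 0 then None
      else Some (triple (P j) (P (j+1)) (P (j+3)) * triple (P (j+2)) (P (j+3)) (P (j+4)) /
                 (triple (P j) (P (j+2)) (P (j+3)) * triple (P (j+1)) (P (j+3)) (P (j+4)))))"
proof -
  have idx: "j + 2 - 2 = j" "j + 2 - 1 = j + 1" "j + 2 + 1 = j + 3" "j + 2 + 2 = j + 4"
    by simp_all
  show ?thesis
    unfolding corner_even_def idx meet_def line_through_def inv_cross_ratio_corner ..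
qed

lemma corner_odd_triple:
  "corner_odd P (j + 2) =
     (if cross3 (P (j+4)) (P (j+3)) = 0 \<or> triple (P (j+4)) (P (j+2)) (P (j+1)) = 0
         \<or> triple (P (j+3)) (P (j+1)) (P j) = 0 then None
      else Some (triple (P (j+4)) (P (j+3)) (P (j+1)) * triple (P (j+2)) (P (j+1)) (P j) /
                 (triple (P (j+4)) (P (j+2)) (P (j+1)) * triple (P (j+3)) (P (j+1)) (P j))))"
proof -
  have idx: "j + 2 - 2 = j" "j + 2 - 1 = j + 1" "j + 2 + 1 = j + 3" "j + 2 + 2 = j + 4"
    by simp_all
  show ?thesis
    unfolding corner_odd_def idx meet_def line_through_def inv_cross_ratio_corner ..
qed

lemma corner_even_scaleR:
  assumes "\<And>j. s j \<noteq> 0"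
  shows "corner_even (\<lambda>j. s j *\<^sub>R P j) i = corner_even P i"
proof -
  have "corner_even (\<lambda>j. s j *\<^sub>R P j) (i - 2 + 2) = corner_even P (i - 2 + 2)"
    unfolding corner_even_triple triple_scaleR cross_mult_left cross_mult_right
    using assms by (auto simp: field_simps)
  then show ?thesis by simp
qed

lemma corner_odd_scaleR:
  assumes "\<And>j. s j \<noteq> 0"
  shows "corner_odd (\<lambda>j. s j *\<^sub>R P j) i = corner_odd P i"
proof -
  have "corner_odd (\<lambda>j. s j *\<^sub>R P j) (i - 2 + 2) = corner_odd P (i - 2 + 2)"
    unfolding corner_odd_triple triple_scaleR cross_mult_left cross_mult_right
    using assms by (auto simp: field_simps)
  then show ?thesis by simp
qed

lemma T3_scaleR:
  "T3 (\<lambda>j. s j *\<^sub>R P j) i = (s i * s (i+1) * s (i+3) * s (i+4)) *\<^sub>R T3 P i"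
  by (simp add: T3_def meet_def line_through_def cross_mult_left cross_mult_right mult_ac)

lemma T3_eq_combination:
  "T3 P i = triple (P i) (P (i+3)) (P (i+4)) *\<^sub>R P (i+1)
             - triple (P i) (P (i+3)) (P (i+1)) *\<^sub>R P (i+4)"
  unfolding T3_def meet_def line_through_def cross3_cross3 ..

lemma T3_twist:
  assumes "invertible M"
    and twist: "\<And>i. \<exists>c. c \<noteq> 0 \<and> P (i + int n) = c *\<^sub>R (M *v P i)"
  shows "\<exists>c. c \<noteq> 0 \<and> T3 P (i + int n) = c *\<^sub>R (M *v T3 P i)"
proof -
  obtain c0 c1 c3 c4 where c: "c0 \<noteq> 0" "c1 \<noteq> 0" "c3 \<noteq> 0" "c4 \<noteq> 0"
    and P0: "P (i + int n) = c0 *\<^sub>R (M *v P i)"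
    and P1: "P (i + int n + 1) = c1 *\<^sub>R (M *v P (i+1))"
    and P3: "P (i + int n + 3) = c3 *\<^sub>R (M *v P (i+3))"
    and P4: "P (i + int n + 4) = c4 *\<^sub>R (M *v P (i+4))"
    using twist[of i] twist[of "i+1"] twist[of "i+3"] twist[of "i+4"] by (auto simp: ac_simps)
  have "T3 P (i + int n) = (c0 * c1 * c3 * c4 * det M) *\<^sub>R (M *v T3 P i)"
    unfolding T3_eq_combination[of P "i + int n"] T3_eq_combination[of P i] P0 P1 P3 P4
      triple_scaleR triple_matrix
    by (simp add: algebra_simps)
  moreover have "c0 * c1 * c3 * c4 * det M \<noteq> 0"
    using c \<open>invertible M\<close> by (simp add: invertible_det_nz)
  ultimately show ?thesis by blast
qed

section \<open>Normalized lifts\<close>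

function normalizing_scale :: "(int \<Rightarrow> real) \<Rightarrow> int \<Rightarrow> real" where
  "normalizing_scale D j =
     (if j = 0 \<or> j = 1 then 1
      else if 2 \<le> j then 1 / (normalizing_scale D (j-2) * normalizing_scale D (j-1) * D (j-2))
      else 1 / (normalizing_scale D (j+1) * normalizing_scale D (j+2) * D j))"
  by auto
termination by (relation "Wellfounded.measure (\<lambda>(_, j). nat \<bar>2 * j - 1\<bar>)") auto

declare normalizing_scale.simps [simp del]

lemma normalizing_scale_nonzero:
  assumes "\<And>j. D j \<noteq> 0"
  shows "normalizing_scale D j \<noteq> 0"
  using assms
  by (induction D j rule: normalizing_scale.induct) (subst normalizing_scale.simps, simp)

lemma normalizing_scale_normalizes:
  assumes "\<And>j. D j \<noteq> 0"
  shows "normalizing_scale D j * normalizing_scale D (j+1) * normalizing_scale D (j+2) * D j = 1"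
proof (cases "0 \<le> j")
  case True
  then have "normalizing_scale D (j+2) = 1 / (normalizing_scale D j * normalizing_scale D (j+1) * D j)"
    by (subst normalizing_scale.simps) (simp add: add.commute)
  then show ?thesis using normalizing_scale_nonzero[OF assms] assms by (simp add: field_simps)
next
  case False
  then have "normalizing_scale D j = 1 / (normalizing_scale D (j+1) * normalizing_scale D (j+2) * D j)"
    by (subst normalizing_scale.simps) (simp add: add.commute)
  then show ?thesis using normalizing_scale_nonzero[OF assms] assms by (simp add: field_simps)
qed

definition normalized_lift :: "(int \<Rightarrow> real^3) \<Rightarrow> bool" where
  "normalized_lift Q \<longleftrightarrow> (\<forall>j. triple (Q j) (Q (j+1)) (Q (j+2)) = 1)"

lemma normalized_liftD: "normalized_lift Q \<Longrightarrow> triple (Q j) (Q (j+1)) (Q (j+2)) = 1"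
  by (simp add: normalized_lift_def)

lemma exists_normalizing_rescaling:
  assumes "\<And>j. triple (P j) (P (j+1)) (P (j+2)) \<noteq> 0"
  obtains s where "\<And>j. s j \<noteq> 0" and "normalized_lift (\<lambda>j. s j *\<^sub>R P j)"
proof
  let ?D = "\<lambda>j. triple (P j) (P (j+1)) (P (j+2))"
  show "normalizing_scale ?D j \<noteq> 0" for j
    using normalizing_scale_nonzero[of ?D] assms by simp
  show "normalized_lift (\<lambda>j. normalizing_scale ?D j *\<^sub>R P j)"
    unfolding normalized_lift_def triple_scaleR add.assoc one_add_one
    using normalizing_scale_normalizes[of ?D] assms by simp
qed

definition lift_coeff_a :: "(int \<Rightarrow> real^3) \<Rightarrow> int \<Rightarrow> real" where
  "lift_coeff_a Q j = triple (Q j) (Q (j+1)) (Q (j+3))"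

definition lift_coeff_c :: "(int \<Rightarrow> real^3) \<Rightarrow> int \<Rightarrow> real" where
  "lift_coeff_c Q j = triple (Q j) (Q (j+2)) (Q (j+3))"

lemma normalized_lift_recurrence:
  assumes "normalized_lift Q"
  shows "Q (j+3) = lift_coeff_a Q j *\<^sub>R Q (j+2) - lift_coeff_c Q j *\<^sub>R Q (j+1) + Q j"
proof -
  have "triple (Q j) (Q (j+1)) (Q (j+2)) = 1" "triple (Q (j+1)) (Q (j+2)) (Q (j+3)) = 1"
    using normalized_liftD[OF assms, of j] normalized_liftD[OF assms, of "j+1"]
    by (simp_all add: add.assoc)
  from cramer_normalized[OF this] show ?thesis
    by (simp add: lift_coeff_a_def lift_coeff_c_def)
qed

lemma corner_even_normalized:
  assumes "normalized_lift Q"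
  defines "a \<equiv> lift_coeff_a Q" and "c \<equiv> lift_coeff_c Q"
  shows "corner_even Q (j+2) =
           (if c j = 0 \<or> c (j+1) = 0 then None else Some (a j / (c j * c (j+1))))"
proof -
  have "triple (Q j) (Q (j+1)) (Q (j+2)) = 1" "triple (Q (j+2)) (Q (j+3)) (Q (j+4)) = 1"
    using normalized_liftD[OF assms(1), of j] normalized_liftD[OF assms(1), of "j+2"]
    by (simp_all add: add.assoc)
  then have "cross3 (Q j) (Q (j+1)) \<noteq> 0" "triple (Q (j+2)) (Q (j+3)) (Q (j+4)) = 1"
    using triple_cycle[of "Q j" "Q (j+1)" "Q (j+2)"] by (auto simp: triple_def)
  then show ?thesis
    unfolding corner_even_triple
    by (simp add: a_def c_def lift_coeff_a_def lift_coeff_c_def add.assoc)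
qed

lemma corner_odd_normalized:
  assumes "normalized_lift Q"
  defines "a \<equiv> lift_coeff_a Q" and "c \<equiv> lift_coeff_c Q"
  shows "corner_odd Q (j+2) =
           (if a (j+1) = 0 \<or> a j = 0 then None else Some (c (j+1) / (a (j+1) * a j)))"
proof -
  have "triple (Q j) (Q (j+1)) (Q (j+2)) = 1" "triple (Q (j+2)) (Q (j+3)) (Q (j+4)) = 1"
    using normalized_liftD[OF assms(1), of j] normalized_liftD[OF assms(1), of "j+2"]
    by (simp_all add: add.assoc)
  then have "cross3 (Q (j+4)) (Q (j+3)) \<noteq> 0" "triple (Q (j+2)) (Q (j+1)) (Q j) = -1"
    using triple_swap_23[of "Q (j+2)" "Q (j+3)" "Q (j+4)"]
      triple_swap_13[of "Q j" "Q (j+1)" "Q (j+2)"]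
    by (auto simp: triple_def)
  then show ?thesis
    unfolding corner_odd_triple
    using triple_swap_13[of "Q (j+1)" "Q (j+3)" "Q (j+4)"]
      triple_swap_13[of "Q (j+1)" "Q (j+2)" "Q (j+4)"] triple_swap_13[of "Q j" "Q (j+1)" "Q (j+3)"]
    by (simp add: a_def c_def lift_coeff_a_def lift_coeff_c_def add.assoc)
qed

lemma T3_normalized:
  assumes "normalized_lift Q"
  defines "a \<equiv> lift_coeff_a Q" and "c \<equiv> lift_coeff_c Q"
  shows "T3 Q j = (c j * c (j+1)) *\<^sub>R Q (j+1) - (a j * c (j+1)) *\<^sub>R Q (j+2)
                  + (a j * a (j+1)) *\<^sub>R Q (j+3)"
proof -
  have rec: "Q (j+4) = a (j+1) *\<^sub>R Q (j+3) - c (j+1) *\<^sub>R Q (j+2) + Q (j+1)"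
    using normalized_lift_recurrence[OF assms(1), of "j+1"] by (simp add: a_def c_def add.assoc)
  have "triple (Q j) (Q (j+3)) (Q (j+2)) = - c j" "triple (Q j) (Q (j+3)) (Q (j+1)) = - a j"
    using triple_swap_23[of "Q j" "Q (j+2)" "Q (j+3)"] triple_swap_23[of "Q j" "Q (j+1)" "Q (j+3)"]
    by (simp_all add: a_def c_def lift_coeff_a_def lift_coeff_c_def)
  then show ?thesis
    unfolding T3_eq_combination rec triple_lin_3 by (simp add: triple_repeated_23 algebra_simps)
qed

section \<open>The corner invariants of T3 P\<close>

definition T3_factor_E :: "(int \<Rightarrow> real) \<Rightarrow> (int \<Rightarrow> real) \<Rightarrow> int \<Rightarrow> real" where
  "T3_factor_E a c j =
     c j * c (j+1) * a (j+1) * a (j+2) - a j * a (j+1) * a (j+2) - c j * c (j+1) * c (j+2)"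

definition T3_factor_F :: "(int \<Rightarrow> real) \<Rightarrow> (int \<Rightarrow> real) \<Rightarrow> int \<Rightarrow> real" where
  "T3_factor_F a c j = (c j * c (j+1) - a j) * (a (j+2) * a (j+3) - c (j+3)) - c j * a (j+3)"

lemma matrix_transpose_rows_mult:
  fixes u v w x :: "real^3"
  shows "transpose (vector [u, v, w] :: real^3^3) *v x = x$1 *\<^sub>R u + x$2 *\<^sub>R v + x$3 *\<^sub>R w"
  unfolding vec_eq_iff forall_3 matrix_vector_mult_def transpose_def sum_3 by simp

lemma normalized_lift_coordinates_step:
  assumes "normalized_lift Q"
    and "B *v u = Q i" "B *v v = Q (i+1)" "B *v w = Q (i+2)"
  shows "B *v (lift_coeff_a Q i *\<^sub>R w - lift_coeff_c Q i *\<^sub>R v + u) = Q (i+3)"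
  using normalized_lift_recurrence[OF assms(1), of i] assms(2-4)
  by (simp add: matrix_vector_right_distrib matrix_vector_mult_diff_distrib matrix_vector_mult_scaleR)

lemma T3_normalized_coordinates:
  assumes "normalized_lift Q"
    and "B *v u = Q (i+1)" "B *v v = Q (i+2)" "B *v w = Q (i+3)"
  defines "a \<equiv> lift_coeff_a Q" and "c \<equiv> lift_coeff_c Q"
  shows "T3 Q i = B *v ((c i * c (i+1)) *\<^sub>R u - (a i * c (i+1)) *\<^sub>R v + (a i * a (i+1)) *\<^sub>R w)"
  using T3_normalized[OF assms(1), of i] assms(2-4)
  by (simp add: matrix_vector_right_distrib matrix_vector_mult_diff_distrib matrix_vector_mult_scaleR
      a_def c_def)

lemma triple_T3_normalized:
  assumes "normalized_lift Q"
  defines "a \<equiv> lift_coeff_a Q" and "c \<equiv> lift_coeff_c Q"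
  defines "E \<equiv> T3_factor_E a c" and "F \<equiv> T3_factor_F a c"
  shows "triple (T3 Q j) (T3 Q (j+1)) (T3 Q (j+2)) = E j * E (j+1)"
    and "triple (T3 Q j) (T3 Q (j+1)) (T3 Q (j+3)) = a (j+3) * E j * F (j+1)"
    and "triple (T3 Q j) (T3 Q (j+2)) (T3 Q (j+3)) = c (j+1) * E (j+2) * F j"
proof -
  \<comment> \<open>coordinates with respect to the basis Q (j+1), Q (j+2), Q (j+3)\<close>
  define B :: "real^3^3" where "B = transpose (vector [Q (j+1), Q (j+2), Q (j+3)])"
  have det_B: "det B = 1"
    using normalized_liftD[OF assms(1), of "j+1"]
    by (simp add: B_def dot_cross_det[symmetric] triple_def add.assoc)
  define f1 f2 f3 :: "real^3"
    where "f1 = vector [1, 0, 0]" and "f2 = vector [0, 1, 0]" and "f3 = vector [0, 0, 1]"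
  define f4 where "f4 = a (j+1) *\<^sub>R f3 - c (j+1) *\<^sub>R f2 + f1"
  define f5 where "f5 = a (j+2) *\<^sub>R f4 - c (j+2) *\<^sub>R f3 + f2"
  define f6 where "f6 = a (j+3) *\<^sub>R f5 - c (j+3) *\<^sub>R f4 + f3"
  note step = normalized_lift_coordinates_step[OF assms(1), folded a_def c_def]
  note T3_coord = T3_normalized_coordinates[OF assms(1), folded a_def c_def]
  have Bf1: "B *v f1 = Q (j+1)" and Bf2: "B *v f2 = Q (j+2)" and Bf3: "B *v f3 = Q (j+3)"
    unfolding B_def matrix_transpose_rows_mult by (simp_all add: f1_def f2_def f3_def)
  have Bf4: "B *v f4 = Q (j+4)"
    using step[where i="j+1", of B f1 f2 f3] Bf1 Bf2 Bf3 by (simp add: f4_def add.assoc)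
  have Bf5: "B *v f5 = Q (j+5)"
    using step[where i="j+2", of B f2 f3 f4] Bf2 Bf3 Bf4 by (simp add: f5_def add.assoc)
  have Bf6: "B *v f6 = Q (j+6)"
    using step[where i="j+3", of B f3 f4 f5] Bf3 Bf4 Bf5 by (simp add: f6_def add.assoc)
  have T0: "T3 Q j = B *v ((c j * c (j+1)) *\<^sub>R f1 - (a j * c (j+1)) *\<^sub>R f2
                          + (a j * a (j+1)) *\<^sub>R f3)"
    by (rule T3_coord) (simp_all add: Bf1 Bf2 Bf3)
  have T1: "T3 Q (j+1) = B *v ((c (j+1) * c (j+2)) *\<^sub>R f2 - (a (j+1) * c (j+2)) *\<^sub>R f3
                                + (a (j+1) * a (j+2)) *\<^sub>R f4)"
    using T3_coord[where i="j+1", of B f2 f3 f4] Bf2 Bf3 Bf4 by (simp add: add.assoc)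
  have T2: "T3 Q (j+2) = B *v ((c (j+2) * c (j+3)) *\<^sub>R f3 - (a (j+2) * c (j+3)) *\<^sub>R f4
                                + (a (j+2) * a (j+3)) *\<^sub>R f5)"
    using T3_coord[where i="j+2", of B f3 f4 f5] Bf3 Bf4 Bf5 by (simp add: add.assoc)
  have T3: "T3 Q (j+3) = B *v ((c (j+3) * c (j+4)) *\<^sub>R f4 - (a (j+3) * c (j+4)) *\<^sub>R f5
                                + (a (j+3) * a (j+4)) *\<^sub>R f6)"
    using T3_coord[where i="j+3", of B f4 f5 f6] Bf4 Bf5 Bf6 by (simp add: add.assoc)
  note coords = f1_def f2_def f3_def f4_def f5_def f6_def triple_expand
  show "triple (T3 Q j) (T3 Q (j+1)) (T3 Q (j+2)) = E j * E (j+1)"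
    unfolding T0 T1 T2 triple_matrix det_B
    by (simp add: coords E_def T3_factor_E_def add.assoc) algebra
  show "triple (T3 Q j) (T3 Q (j+1)) (T3 Q (j+3)) = a (j+3) * E j * F (j+1)"
    unfolding T0 T1 T3 triple_matrix det_B
    by (simp add: coords E_def F_def T3_factor_E_def T3_factor_F_def add.assoc) algebra
  show "triple (T3 Q j) (T3 Q (j+2)) (T3 Q (j+3)) = c (j+1) * E (j+2) * F j"
    unfolding T0 T2 T3 triple_matrix det_B
    by (simp add: coords E_def F_def T3_factor_E_def T3_factor_F_def add.assoc) algebra
qed

lemma T3_normalized_corners:
  assumes "normalized_lift Q"
  defines "a \<equiv> lift_coeff_a Q" and "c \<equiv> lift_coeff_c Q"
  defines "E \<equiv> T3_factor_E a c" and "F \<equiv> T3_factor_F a c"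
  assumes a: "\<And>j. a j \<noteq> 0" and c: "\<And>j. c j \<noteq> 0"
    and E: "\<And>j. E j \<noteq> 0" and F: "\<And>j. F j \<noteq> 0"
  shows "triple (T3 Q j) (T3 Q (j+1)) (T3 Q (j+2)) \<noteq> 0"
    and "corner_even (T3 Q) (j+2) = Some (a (j+3) * E j / (c (j+1) * c (j+2) * F j))"
    and "corner_odd (T3 Q) (j+2) = Some (c (j+2) * E (j+3) / (a (j+3) * a (j+4) * F (j+2)))"
proof -
  let ?T = "T3 Q"
  note D = triple_T3_normalized[OF assms(1), folded a_def c_def, folded E_def F_def]
  have D0: "triple (?T j) (?T (j+1)) (?T (j+2)) = E j * E (j+1)"
    and D1: "triple (?T (j+2)) (?T (j+3)) (?T (j+4)) = E (j+2) * E (j+3)"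
    and D2: "triple (?T j) (?T (j+1)) (?T (j+3)) = a (j+3) * E j * F (j+1)"
    and D3: "triple (?T (j+1)) (?T (j+2)) (?T (j+4)) = a (j+4) * E (j+1) * F (j+2)"
    and D4: "triple (?T j) (?T (j+2)) (?T (j+3)) = c (j+1) * E (j+2) * F j"
    and D5: "triple (?T (j+1)) (?T (j+3)) (?T (j+4)) = c (j+2) * E (j+3) * F (j+1)"
    using D(1)[of j] D(1)[of "j+2"] D(2)[of j] D(2)[of "j+1"] D(3)[of j] D(3)[of "j+1"]
    by (simp_all add: add.assoc)
  show "triple (?T j) (?T (j+1)) (?T (j+2)) \<noteq> 0"
    using D0 E by simp
  have "cross3 (?T j) (?T (j+1)) \<noteq> 0"
    using D0 E triple_cycle[of "?T j" "?T (j+1)" "?T (j+2)"] by (auto simp: triple_def)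
  then show "corner_even ?T (j+2) = Some (a (j+3) * E j / (c (j+1) * c (j+2) * F j))"
    unfolding corner_even_triple D1 D2 D4 D5 using a c E F by (simp add: field_simps)
  have "cross3 (?T (j+4)) (?T (j+3)) \<noteq> 0"
    using D1 E triple_swap_23[of "?T (j+2)" "?T (j+3)" "?T (j+4)"] by (auto simp: triple_def)
  moreover have "triple (?T (j+4)) (?T (j+3)) (?T (j+1)) = - c (j+2) * E (j+3) * F (j+1)"
    using D5 triple_swap_13[of "?T (j+1)" "?T (j+3)" "?T (j+4)"] by simp
  moreover have "triple (?T (j+2)) (?T (j+1)) (?T j) = - E j * E (j+1)"
    using D0 triple_swap_13[of "?T j" "?T (j+1)" "?T (j+2)"] by simp
  moreover have "triple (?T (j+4)) (?T (j+2)) (?T (j+1)) = - a (j+4) * E (j+1) * F (j+2)"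
    using D3 triple_swap_13[of "?T (j+1)" "?T (j+2)" "?T (j+4)"] by simp
  moreover have "triple (?T (j+3)) (?T (j+1)) (?T j) = - a (j+3) * E j * F (j+1)"
    using D2 triple_swap_13[of "?T j" "?T (j+1)" "?T (j+3)"] by simp
  ultimately show "corner_odd ?T (j+2) = Some (c (j+2) * E (j+3) / (a (j+3) * a (j+4) * F (j+2)))"
    unfolding corner_odd_triple using a c E F by (simp add: field_simps)
qed

lemma T3_factors_in_corner_coordinates:
  fixes a c x y :: "int \<Rightarrow> real"
  assumes a: "\<And>j. a j \<noteq> 0" and c: "\<And>j. c j \<noteq> 0"
    and x: "\<And>j. x (j+2) = a j / (c j * c (j+1))"
    and y: "\<And>j. y (j+2) = c (j+1) / (a (j+1) * a j)"
  shows "T3_factor_E a c j = c j * c (j+1) * a (j+1) * a (j+2) * (1 - x (j+2) - y (j+3))"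
    and "T3_factor_F a c j = c j * c (j+1) * a (j+2) * a (j+3)
                             * ((1 - x (j+2)) * (1 - y (j+4)) - x (j+3) * y (j+3))"
proof -
  have x3: "x (j+3) = a (j+1) / (c (j+1) * c (j+2))"
    and y3: "y (j+3) = c (j+2) / (a (j+2) * a (j+1))"
    and y4: "y (j+4) = c (j+3) / (a (j+3) * a (j+2))"
    using x[of "j+1"] y[of "j+1"] y[of "j+2"] by (simp_all add: add.assoc)
  show "T3_factor_E a c j = c j * c (j+1) * a (j+1) * a (j+2) * (1 - x (j+2) - y (j+3))"
    unfolding T3_factor_E_def x y3 using a c by (simp add: field_simps)
  show "T3_factor_F a c j = c j * c (j+1) * a (j+2) * a (j+3)
                             * ((1 - x (j+2)) * (1 - y (j+4)) - x (j+3) * y (j+3))"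
    unfolding T3_factor_F_def x x3 y3 y4 using a c by (simp add: field_simps)
qed

definition corner_map_even :: "real \<Rightarrow> real \<Rightarrow> real \<Rightarrow> real \<Rightarrow> real" where
  "corner_map_even p0 p1 q1 q2 = p1 * (1 - p0 - q1) / ((1 - p0) * (1 - q2) - p1 * q1)"

definition corner_map_odd :: "real \<Rightarrow> real \<Rightarrow> real \<Rightarrow> real \<Rightarrow> real" where
  "corner_map_odd p2 p3 q3 q4 = q3 * (1 - p3 - q4) / ((1 - p2) * (1 - q4) - p3 * q3)"

lemma T3_corner_ratio_even:
  fixes a c x y :: "int \<Rightarrow> real"
  assumes a: "\<And>j. a j \<noteq> 0" and c: "\<And>j. c j \<noteq> 0"
    and x: "\<And>j. x (j+2) = a j / (c j * c (j+1))"
    and y: "\<And>j. y (j+2) = c (j+1) / (a (j+1) * a j)"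
    and F: "(1 - x (j+2)) * (1 - y (j+4)) - x (j+3) * y (j+3) \<noteq> 0"
  shows "a (j+3) * T3_factor_E a c j / (c (j+1) * c (j+2) * T3_factor_F a c j)
           = corner_map_even (x (j+2)) (x (j+3)) (y (j+3)) (y (j+4))"
proof -
  define e where "e = 1 - x (j+2) - y (j+3)"
  define f where "f = (1 - x (j+2)) * (1 - y (j+4)) - x (j+3) * y (j+3)"
  have x3: "x (j+3) = a (j+1) / (c (j+1) * c (j+2))"
    using x[of "j+1"] by (simp add: add.assoc)
  have EF: "T3_factor_E a c j = c j * c (j+1) * a (j+1) * a (j+2) * e"
    "T3_factor_F a c j = c j * c (j+1) * a (j+2) * a (j+3) * f"
    unfolding e_def f_def by (rule T3_factors_in_corner_coordinates[of a c x y, OF a c x y])+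
  have "a (j+3) * T3_factor_E a c j / (c (j+1) * c (j+2) * T3_factor_F a c j) = x (j+3) * e / f"
    unfolding EF x3 using F a c by (simp add: f_def[symmetric] field_simps)
  also have "\<dots> = corner_map_even (x (j+2)) (x (j+3)) (y (j+3)) (y (j+4))"
    by (simp add: corner_map_even_def e_def f_def)
  finally show ?thesis .
qed

lemma T3_corner_ratio_odd:
  fixes a c x y :: "int \<Rightarrow> real"
  assumes a: "\<And>j. a j \<noteq> 0" and c: "\<And>j. c j \<noteq> 0"
    and x: "\<And>j. x (j+2) = a j / (c j * c (j+1))"
    and y: "\<And>j. y (j+2) = c (j+1) / (a (j+1) * a j)"
    and F: "(1 - x (j+4)) * (1 - y (j+6)) - x (j+5) * y (j+5) \<noteq> 0"
  shows "c (j+2) * T3_factor_E a c (j+3) / (a (j+3) * a (j+4) * T3_factor_F a c (j+2))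
           = corner_map_odd (x (j+4)) (x (j+5)) (y (j+5)) (y (j+6))"
proof -
  note factors = T3_factors_in_corner_coordinates[of a c x y, OF a c x y]
  define e where "e = 1 - x (j+5) - y (j+6)"
  define f where "f = (1 - x (j+4)) * (1 - y (j+6)) - x (j+5) * y (j+5)"
  have y5: "y (j+5) = c (j+4) / (a (j+4) * a (j+3))"
    using y[of "j+3"] by (simp add: add.assoc)
  have EF: "T3_factor_E a c (j+3) = c (j+3) * c (j+4) * a (j+4) * a (j+5) * e"
    "T3_factor_F a c (j+2) = c (j+2) * c (j+3) * a (j+4) * a (j+5) * f"
    using factors(1)[of "j+3"] factors(2)[of "j+2"] by (simp_all add: e_def f_def add.assoc)
  have "c (j+2) * T3_factor_E a c (j+3) / (a (j+3) * a (j+4) * T3_factor_F a c (j+2))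
          = y (j+5) * e / f"
    unfolding EF y5 using F a c by (simp add: f_def[symmetric] field_simps)
  also have "\<dots> = corner_map_odd (x (j+4)) (x (j+5)) (y (j+5)) (y (j+6))"
    by (simp add: corner_map_odd_def e_def f_def)
  finally show ?thesis .
qed

lemma T3_corner_invariants:
  fixes P :: "int \<Rightarrow> real^3" and x y :: "int \<Rightarrow> real"
  assumes nondeg: "\<And>j. triple (P j) (P (j+1)) (P (j+2)) \<noteq> 0"
    and x: "\<And>j. corner_even P j = Some (x j)" and y: "\<And>j. corner_odd P j = Some (y j)"
    and E: "\<And>j. 1 - x j - y (j+1) \<noteq> 0"
    and F: "\<And>j. (1 - x j) * (1 - y (j+2)) - x (j+1) * y (j+1) \<noteq> 0"
  shows "triple (T3 P j) (T3 P (j+1)) (T3 P (j+2)) \<noteq> 0"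
    and "corner_even (T3 P) i = Some (corner_map_even (x i) (x (i+1)) (y (i+1)) (y (i+2)))"
    and "corner_odd (T3 P) i = Some (corner_map_odd (x (i+2)) (x (i+3)) (y (i+3)) (y (i+4)))"
proof -
  obtain s where s: "\<And>j. s j \<noteq> 0" and normalized: "normalized_lift (\<lambda>j. s j *\<^sub>R P j)"
    using exists_normalizing_rescaling nondeg by blast
  define Q where "Q = (\<lambda>j. s j *\<^sub>R P j)"
  have Q: "normalized_lift Q"
    using normalized by (simp add: Q_def)
  define a where "a = lift_coeff_a Q"
  define c where "c = lift_coeff_c Q"
  have xQ: "corner_even Q (j+2) = Some (x (j+2))" and yQ: "corner_odd Q (j+2) = Some (y (j+2))" for j
    using x y by (simp_all add: Q_def corner_even_scaleR corner_odd_scaleR s)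
  have c_nz: "c j \<noteq> 0" and a_nz: "a j \<noteq> 0"
    and x_ac: "x (j+2) = a j / (c j * c (j+1))" and y_ac: "y (j+2) = c (j+1) / (a (j+1) * a j)" for j
    using xQ[of j] yQ[of j] corner_even_normalized[OF Q, of j] corner_odd_normalized[OF Q, of j]
    by (auto simp: a_def c_def split: if_splits)
  have E_nz: "T3_factor_E a c j \<noteq> 0" and F_nz: "T3_factor_F a c j \<noteq> 0" for j
    unfolding T3_factors_in_corner_coordinates[of a c x y, OF a_nz c_nz x_ac y_ac]
    using a_nz c_nz E[of "j+2"] F[of "j+2"] by (simp_all add: add.assoc)
  note TQ = T3_normalized_corners[OF Q, folded a_def c_def, OF a_nz c_nz E_nz F_nz]
  define \<mu> where "\<mu> i = s i * s (i+1) * s (i+3) * s (i+4)" for i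
  have \<mu>: "\<And>i. \<mu> i \<noteq> 0" and T3Q: "T3 Q = (\<lambda>i. \<mu> i *\<^sub>R T3 P i)"
    using s by (auto simp: \<mu>_def Q_def T3_scaleR)
  show "triple (T3 P j) (T3 P (j+1)) (T3 P (j+2)) \<noteq> 0"
    using TQ(1)[of j] by (simp add: T3Q triple_scaleR)
  have "corner_even (T3 P) (j+2) = Some (corner_map_even (x (j+2)) (x (j+3)) (y (j+3)) (y (j+4)))"
    and "corner_odd (T3 P) (j+2) = Some (corner_map_odd (x (j+4)) (x (j+5)) (y (j+5)) (y (j+6)))"
    for j
    using TQ(2,3)[of j] F[of "j+2"] F[of "j+4"]
      T3_corner_ratio_even[of a c x y, OF a_nz c_nz x_ac y_ac]
      T3_corner_ratio_odd[of a c x y, OF a_nz c_nz x_ac y_ac]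
    by (simp_all add: T3Q corner_even_scaleR corner_odd_scaleR \<mu> add.assoc)
  from this[of "i - 2"]
  show "corner_even (T3 P) i = Some (corner_map_even (x i) (x (i+1)) (y (i+1)) (y (i+2)))"
    and "corner_odd (T3 P) i = Some (corner_map_odd (x (i+2)) (x (i+3)) (y (i+3)) (y (i+4)))"
    by (simp_all add: algebra_simps)
qed

section \<open>Boxes of corner invariants preserved by T3\<close>

lemma corner_map_odd_eq_even: "corner_map_odd p p' q q' = corner_map_even q' q p' p"
  by (simp add: corner_map_even_def corner_map_odd_def algebra_simps)

definition T3_invariant_box :: "real set \<Rightarrow> real set \<Rightarrow> bool" where
  "T3_invariant_box X Y \<longleftrightarrow>
     (\<forall>p\<in>X. \<forall>p'\<in>X. \<forall>q\<in>Y. \<forall>q'\<in>Y. 1 - p - q \<noteq> 0 \<and> (1 - p) * (1 - q') - p' * q \<noteq> 0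
        \<and> corner_map_even p p' q q' \<in> X \<and> corner_map_odd p p' q q' \<in> Y)"

lemma T3_invariant_box_swap:
  assumes "T3_invariant_box X Y" shows "T3_invariant_box Y X"
  unfolding T3_invariant_box_def
proof (intro ballI)
  fix q q' p p' assume "q \<in> Y" "q' \<in> Y" "p \<in> X" "p' \<in> X"
  with assms[unfolded T3_invariant_box_def, rule_format, of p' p q' q]
    assms[unfolded T3_invariant_box_def, rule_format, of p p q q]
  show "1 - q - p \<noteq> 0 \<and> (1 - q) * (1 - p') - q' * p \<noteq> 0
        \<and> corner_map_even q q' p p' \<in> Y \<and> corner_map_odd q q' p p' \<in> X"
    by (simp add: corner_map_odd_eq_even algebra_simps)
qed

lemma corner_map_even_minus_denominator:
  "p' * (1 - p - q) - ((1 - p) * (1 - q') - p' * q) = (1 - p) * (p' - 1 + q')" for p :: real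
  by (simp add: algebra_simps)

lemma corner_map_odd_minus_denominator:
  "q * (1 - p' - q') - ((1 - p) * (1 - q') - p' * q) = (1 - q') * (q - 1 + p)" for p :: real
  by (simp add: algebra_simps)

lemma T3_invariant_box_I_J: "T3_invariant_box Iint Jint"
  unfolding T3_invariant_box_def Iint_def Jint_def
proof (intro ballI)
  fix p p' q q' :: real
  assume "p \<in> {..<0}" "p' \<in> {..<0}" "q \<in> {0<..<1}" "q' \<in> {0<..<1}"
  then have p: "p < 0" "p' < 0" and q: "0 < q" "q < 1" "0 < q'" "q' < 1" by auto
  define D where "D = (1 - p) * (1 - q') - p' * q"
  have "0 < (1 - p) * (1 - q')" "p' * q < 0" "(1 - q') * (q - 1 + p) < 0"
    using p q by (simp_all add: mult_neg_pos mult_pos_neg)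
  then have D: "0 < D" and odd_num: "q * (1 - p' - q') < D"
    using corner_map_odd_minus_denominator[of q p' q' p] by (simp_all add: D_def)
  have "corner_map_even p p' q q' < 0"
    unfolding corner_map_even_def D_def[symmetric] using D p q by (simp add: divide_neg_pos mult_neg_pos)
  moreover have "0 < corner_map_odd p p' q q'" "corner_map_odd p p' q q' < 1"
    unfolding corner_map_odd_def D_def[symmetric] using D odd_num p q by simp_all
  ultimately show "1 - p - q \<noteq> 0 \<and> (1 - p) * (1 - q') - p' * q \<noteq> 0
     \<and> corner_map_even p p' q q' \<in> {..<0} \<and> corner_map_odd p p' q q' \<in> {0<..<1}"
    using D p q by (simp add: D_def[symmetric])
qed

lemma T3_invariant_box_K_J: "T3_invariant_box Kint Jint"
  unfolding T3_invariant_box_def Kint_def Jint_def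
proof (intro ballI)
  fix p p' q q' :: real
  assume "p \<in> {1<..}" "p' \<in> {1<..}" "q \<in> {0<..<1}" "q' \<in> {0<..<1}"
  then have p: "1 < p" "1 < p'" and q: "0 < q" "q < 1" "0 < q'" "q' < 1" by auto
  define D where "D = (1 - p) * (1 - q') - p' * q"
  have "(1 - p) * (1 - q') < 0" "0 < p' * q"
    "(1 - p) * (p' - 1 + q') < 0" "0 < (1 - q') * (q - 1 + p)"
    using p q by (simp_all add: mult_neg_pos)
  then have D: "D < 0" and even_num: "p' * (1 - p - q) < D" and odd_num: "D < q * (1 - p' - q')"
    using corner_map_even_minus_denominator[of p' p q q'] corner_map_odd_minus_denominator[of q p' q' p]
    by (simp_all add: D_def)
  have "q * (1 - p' - q') < 0"
    using p q by (simp add: mult_pos_neg)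
  then have "0 < corner_map_odd p p' q q'" "corner_map_odd p p' q q' < 1"
    unfolding corner_map_odd_def D_def[symmetric] using D odd_num
    by (simp_all add: zero_less_divide_iff)
  moreover have "1 < corner_map_even p p' q q'"
    unfolding corner_map_even_def D_def[symmetric] using D even_num by simp
  ultimately show "1 - p - q \<noteq> 0 \<and> (1 - p) * (1 - q') - p' * q \<noteq> 0
     \<and> corner_map_even p p' q q' \<in> {1<..} \<and> corner_map_odd p p' q q' \<in> {0<..<1}"
    using D p q by (simp add: D_def[symmetric])
qed


lemma T3_preserves_in_S:
  assumes box: "T3_invariant_box X Y" and S: "in_S n X Y P"
  shows "in_S n X Y (T3 P)"
proof -
  obtain M :: "real^3^3" where M: "invertible M"
    and twist: "\<And>i. \<exists>c. c \<noteq> 0 \<and> P (i + int n) = c *\<^sub>R (M *v P i)"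
    and nondeg: "\<And>i. triple (P i) (P (i+1)) (P (i+2)) \<noteq> 0"
    using S by (auto simp: in_S_def twisted_ngon_def proj_collinear_iff_triple)
  define x where "x i = the (corner_even P i)" for i
  define y where "y i = the (corner_odd P i)" for i
  have x: "corner_even P i = Some (x i)" "x i \<in> X" and y: "corner_odd P i = Some (y i)" "y i \<in> Y" for i
  proof -
    obtain u v where "corner_even P i = Some u" "u \<in> X" "corner_odd P i = Some v" "v \<in> Y"
      using S unfolding in_S_def by blast
    then show "corner_even P i = Some (x i)" "x i \<in> X" "corner_odd P i = Some (y i)" "y i \<in> Y"
      by (simp_all add: x_def y_def)
  qed
  have E: "1 - x i - y (i+1) \<noteq> 0" and F: "(1 - x i) * (1 - y (i+2)) - x (i+1) * y (i+1) \<noteq> 0" for i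
    using box x(2) y(2) unfolding T3_invariant_box_def by blast+
  note T = T3_corner_invariants[OF nondeg x(1) y(1) E F]
  have "twisted_ngon n (T3 P)"
    unfolding twisted_ngon_def proj_collinear_iff_triple
    using T(1) T3_twist[where P = P and n = n, OF M twist] M by (metis triple_zero_left)
  moreover have "corner_map_even (x i) (x (i+1)) (y (i+1)) (y (i+2)) \<in> X"
    "corner_map_odd (x (i+2)) (x (i+3)) (y (i+3)) (y (i+4)) \<in> Y" for i
    using box x(2) y(2) unfolding T3_invariant_box_def by blast+
  ultimately show ?thesis
    unfolding in_S_def using T(2,3) by blast
qed

theorem mainTheorem10:
  fixes n :: nat
  assumes "n \<ge> 2"
  shows "(\<forall>P. in_S n Iint Jint P \<longrightarrow> in_S n Iint Jint (T3 P)) \<and>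
         (\<forall>P. in_S n Kint Jint P \<longrightarrow> in_S n Kint Jint (T3 P)) \<and>
         (\<forall>P. in_S n Jint Iint P \<longrightarrow> in_S n Jint Iint (T3 P)) \<and>
         (\<forall>P. in_S n Jint Kint P \<longrightarrow> in_S n Jint Kint (T3 P))"
  using T3_preserves_in_S T3_invariant_box_I_J T3_invariant_box_K_J
    T3_invariant_box_swap[OF T3_invariant_box_I_J] T3_invariant_box_swap[OF T3_invariant_box_K_J]
  by blast

end
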